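(* Let $2\le G\le 8$. For $p\in(0,1)$, let $r_1,\dots,r_G$ be i.i.d. $\mathrm{Bernoulli}(p)$, $R=\sum_j r_j$, $\hat p=R/G$, $\hat A_i=r_i-\hat p$, $A_i=r_i-p$, $\mathcal S=\{1\le R\le G-1\}$. For an interval $I\subseteq[0,1]$ of positive length and an event $E$, set $\mathbb P(E\mid\mathcal S,\ p\in I):=\frac{1}{|I|}\int_I \mathbb P_p(E\mid \mathcal S)\,dp$, where $\mathbb P_p$ is the law for expected reward $p$ (i.e. $p$ is uniformly distributed on $I$). Then for every $i\in[G]$: \[ \begin{aligned} &\mathbb P(\hat A_i<A_i\mid\mathcal S,\ p<0.5)>0.63, &&\mathbb P(\hat A_i>A_i\mid\mathcal S,\ p>0.5)>0.63,\\ &\mathbb P(\hat A_i<A_i\mid\mathcal S,\ p<0.25)>0.78, &&\mathbb P(\hat A_i>A_i\mid\mathcal S,\ p>0.75)>0.78,\\ &\mathbb P(\hat A_i<A_i\mid\mathcal S,\ p<0.125)=1, &&\mathbb P(\hat A_i>A_i\mid\mathcal S,\ p>0.875)=1. \end{aligned} \]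
   Context: Binary-reward group setting: $\hat p$ is the group baseline, $\hat A_i$ the group-relative advantage, $A_i$ the expected advantage, $\mathcal S$ the non-degenerate event. The expected reward $p$ is assumed uniformly distributed over $[0,1]$, and conditioning on $p$ lying in a subinterval is understood as averaging the conditional probability given $\mathcal S$ uniformly over that subinterval. *)

theory Defs
  imports "HOL-Probability.Probability"
begin

text \<open>Law of the rewards r_0,...,r_{G-1}: i.i.d. Bernoulli(p); indices 0..G-1
  stand for the paper's 1..G. Outside the index range the outcome is False.\<close>
definition reward_pmf :: "nat \<Rightarrow> real \<Rightarrow> (nat \<Rightarrow> bool) pmf" where
  "reward_pmf G p = Pi_pmf {..<G} False (\<lambda>_. bernoulli_pmf p)"

definition total_reward :: "nat \<Rightarrow> (nat \<Rightarrow> bool) \<Rightarrow> real" where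
  "total_reward G r = (\<Sum>j<G. of_bool (r j))"

definition baseline :: "nat \<Rightarrow> (nat \<Rightarrow> bool) \<Rightarrow> real" where
  "baseline G r = total_reward G r / real G"

definition adv_hat :: "nat \<Rightarrow> (nat \<Rightarrow> bool) \<Rightarrow> nat \<Rightarrow> real" where
  "adv_hat G r i = of_bool (r i) - baseline G r"

definition adv :: "real \<Rightarrow> (nat \<Rightarrow> bool) \<Rightarrow> nat \<Rightarrow> real" where
  "adv p r i = of_bool (r i) - p"

definition nondeg :: "nat \<Rightarrow> (nat \<Rightarrow> bool) set" where
  "nondeg G = {r. 1 \<le> total_reward G r \<and> total_reward G r \<le> real G - 1}"

definition cond_prob_S :: "nat \<Rightarrow> real \<Rightarrow> (nat \<Rightarrow> bool) set \<Rightarrow> real" where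
  "cond_prob_S G p E =
     measure_pmf.prob (reward_pmf G p) (E \<inter> nondeg G) / measure_pmf.prob (reward_pmf G p) (nondeg G)"

definition avg_over :: "real \<Rightarrow> real \<Rightarrow> (real \<Rightarrow> real) \<Rightarrow> real" where
  "avg_over a b f = integral {a..b} f / (b - a)"

end

theory Submission
  imports Defs
begin

text \<open>Since \<open>\<hat>A\<^sub>i < A\<^sub>i\<close> iff \<open>R > pG\<close>, the conditional probability in question is
  \<open>P\<^sub>p(R > pG | S)\<close>: it equals 1 for \<open>p < 1/G\<close> and agrees with \<open>P\<^sub>p(R > k | S)\<close> on
  \<open>(k/G, (k+1)/G)\<close>. The latter is increasing in \<open>p\<close>, because the binomial family has a
  monotone likelihood ratio, so the integral over \<open>[0, T]\<close> is bounded below by a left Riemann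
  sum. At the nodes \<open>p = u/N\<close> the summands are ratios of integers, which are rounded down and
  added up exactly. Flipping all rewards exchanges \<open>R\<close> with \<open>G - R\<close> and \<open>p\<close> with \<open>1 - p\<close>,
  which turns the statements for \<open>p > 1 - T\<close> into those for \<open>p < T\<close>.\<close>

definition binom_mass :: "nat \<Rightarrow> real \<Rightarrow> nat \<Rightarrow> real" where
  "binom_mass G p j = real (G choose j) * p ^ j * (1 - p) ^ (G - j)"

definition tail_mass :: "nat \<Rightarrow> nat \<Rightarrow> real \<Rightarrow> real" where
  "tail_mass G k p = (\<Sum>j\<in>{Suc k..<G}. binom_mass G p j)"

text \<open>\<open>P\<^sub>p(R > k | S)\<close>; the denominator \<open>tail_mass G 0 p\<close> is \<open>P\<^sub>p(S)\<close>.\<close>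
definition cond_tail :: "nat \<Rightarrow> nat \<Rightarrow> real \<Rightarrow> real" where
  "cond_tail G k p = tail_mass G k p / tail_mass G 0 p"

lemma total_reward_eq_card: "total_reward G r = real (card {j \<in> {..<G}. r j})"
proof -
  have "(\<Sum>j<G. of_bool (r j)) = (\<Sum>j\<in>{j \<in> {..<G}. r j}. (1::real))"
    by (intro sum.mono_neutral_cong_right) auto
  then show ?thesis
    unfolding total_reward_def by simp
qed

lemma prob_total_reward:
  assumes "0 < p" "p < 1"
  shows "measure_pmf.prob (reward_pmf G p) (total_reward G -` A) =
    (\<Sum>j\<in>{j. j \<le> G \<and> real j \<in> A}. binom_mass G p j)"
proof -
  have binomial: "binomial_pmf G p = map_pmf (\<lambda>r. card {j \<in> {..<G}. r j}) (reward_pmf G p)"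
    unfolding reward_pmf_def by (rule binomial_pmf_altdef') (use assms in auto)
  have "measure_pmf.prob (reward_pmf G p) (total_reward G -` A) =
      measure_pmf.prob (binomial_pmf G p) {j. real j \<in> A}"
    by (simp add: binomial total_reward_eq_card vimage_def)
  also have "\<dots> = measure_pmf.prob (binomial_pmf G p) ({j. real j \<in> A} \<inter> set_pmf (binomial_pmf G p))"
    by (simp add: measure_Int_set_pmf)
  also have "{j. real j \<in> A} \<inter> set_pmf (binomial_pmf G p) = {j. j \<le> G \<and> real j \<in> A}"
    using assms by auto
  also have "measure_pmf.prob (binomial_pmf G p) {j. j \<le> G \<and> real j \<in> A} =
      (\<Sum>j\<in>{j. j \<le> G \<and> real j \<in> A}. pmf (binomial_pmf G p) j)"
    by (rule measure_measure_pmf_finite) auto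
  finally show ?thesis
    using assms by (simp add: binom_mass_def)
qed

lemma cond_prob_S_total_reward:
  assumes "0 < p" "p < 1"
  shows "cond_prob_S G p (total_reward G -` A) =
    (\<Sum>j\<in>{j \<in> {1..<G}. real j \<in> A}. binom_mass G p j) / tail_mass G 0 p"
proof -
  have nondeg: "nondeg G = total_reward G -` {1..real G - 1}"
    by (auto simp: nondeg_def)
  have "{j. j \<le> G \<and> real j \<in> A \<inter> {1..real G - 1}} = {j \<in> {1..<G}. real j \<in> A}"
    and "{j. j \<le> G \<and> real j \<in> {1..real G - 1}} = {1..<G}"
    by auto
  then have "measure_pmf.prob (reward_pmf G p) (total_reward G -` (A \<inter> {1..real G - 1})) /
      measure_pmf.prob (reward_pmf G p) (total_reward G -` {1..real G - 1}) =
      (\<Sum>j\<in>{j \<in> {1..<G}. real j \<in> A}. binom_mass G p j) / tail_mass G 0 p"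
    by (simp only: prob_total_reward[OF assms] tail_mass_def One_nat_def)
  then show ?thesis
    by (simp only: cond_prob_S_def nondeg vimage_Int)
qed

lemma adv_hat_less_adv_iff: "0 < G \<Longrightarrow> adv_hat G r i < adv p r i \<longleftrightarrow> p * G < total_reward G r"
  by (simp add: adv_hat_def adv_def baseline_def field_simps)

lemma adv_hat_greater_adv_iff: "0 < G \<Longrightarrow> adv_hat G r i > adv p r i \<longleftrightarrow> total_reward G r < p * G"
  by (simp add: adv_hat_def adv_def baseline_def field_simps)

lemma binom_mass_nonneg: "0 \<le> p \<Longrightarrow> p \<le> 1 \<Longrightarrow> 0 \<le> binom_mass G p j"
  by (simp add: binom_mass_def)

lemma tail_mass_pos:
  assumes "0 < p" "p < 1" "Suc k < G"
  shows "0 < tail_mass G k p"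
proof -
  have "0 < binom_mass G p (Suc k)"
    using assms by (simp add: binom_mass_def)
  also have "\<dots> \<le> tail_mass G k p"
    unfolding tail_mass_def
    by (rule member_le_sum) (use assms in \<open>auto intro: binom_mass_nonneg\<close>)
  finally show ?thesis .
qed

lemma cond_tail_0: "0 < p \<Longrightarrow> p < 1 \<Longrightarrow> 2 \<le> G \<Longrightarrow> cond_tail G 0 p = 1"
  using tail_mass_pos[of p 0 G] by (simp add: cond_tail_def)

lemma cond_prob_S_adv_hat_less:
  assumes "0 < p" "p < 1" "0 < G" "real k \<le> p * G" "p * G < real k + 1"
  shows "cond_prob_S G p {r. adv_hat G r i < adv p r i} = cond_tail G k p"
proof -
  have "{r. adv_hat G r i < adv p r i} = total_reward G -` {p * G<..}"
    using adv_hat_less_adv_iff[OF assms(3)] by auto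
  moreover have "{j \<in> {1..<G}. real j \<in> {p * G<..}} = {Suc k..<G}"
  proof (intro set_eqI iffI)
    fix j
    assume "j \<in> {j \<in> {1..<G}. real j \<in> {p * G<..}}"
    then have "real k < real j" "j < G"
      using assms(4) by auto
    then show "j \<in> {Suc k..<G}"
      by simp
  next
    fix j
    assume "j \<in> {Suc k..<G}"
    then have "real k + 1 \<le> real j" "1 \<le> j" "j < G"
      by auto
    then show "j \<in> {j \<in> {1..<G}. real j \<in> {p * G<..}}"
      using assms(5) by auto
  qed
  ultimately show ?thesis
    by (simp add: cond_prob_S_total_reward[OF assms(1,2)] cond_tail_def tail_mass_def)
qed

lemma binom_mass_reflect: "j \<le> G \<Longrightarrow> binom_mass G (1 - p) j = binom_mass G p (G - j)"
  by (simp add: binom_mass_def binomial_symmetric[of j G] mult_ac)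

lemma cond_prob_S_adv_hat_greater_reflect:
  assumes "0 < p" "p < 1" "0 < G"
  shows "cond_prob_S G p {r. adv_hat G r i > adv p r i} =
    cond_prob_S G (1 - p) {r. adv_hat G r i < adv (1 - p) r i}"
proof -
  have greater: "{r. adv_hat G r i > adv p r i} = total_reward G -` {..<p * G}"
    and less: "{r. adv_hat G r i < adv (1 - p) r i} = total_reward G -` {(1 - p) * G<..}"
    using adv_hat_greater_adv_iff[OF assms(3)] adv_hat_less_adv_iff[OF assms(3)] by auto
  have "cond_prob_S G p {r. adv_hat G r i > adv p r i} =
      (\<Sum>j\<in>{j \<in> {1..<G}. real j \<in> {..<p * G}}. binom_mass G p j) / tail_mass G 0 p"
    unfolding greater by (rule cond_prob_S_total_reward[OF assms(1,2)])
  also have "(\<Sum>j\<in>{j \<in> {1..<G}. real j \<in> {..<p * G}}. binom_mass G p j) =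
      (\<Sum>j\<in>{j \<in> {1..<G}. real j \<in> {(1 - p) * G<..}}. binom_mass G (1 - p) j)"
    by (intro sum.reindex_bij_witness[of _ "\<lambda>j. G - j" "\<lambda>j. G - j"])
      (auto simp: binom_mass_reflect of_nat_diff left_diff_distrib)
  also have "tail_mass G 0 p = tail_mass G 0 (1 - p)"
    unfolding tail_mass_def
    by (rule sum.reindex_bij_witness[of _ "\<lambda>j. G - j" "\<lambda>j. G - j"]) (auto simp: binom_mass_reflect)
  also have "(\<Sum>j\<in>{j \<in> {1..<G}. real j \<in> {(1 - p) * G<..}}. binom_mass G (1 - p) j) /
      tail_mass G 0 (1 - p) = cond_prob_S G (1 - p) {r. adv_hat G r i < adv (1 - p) r i}"
    unfolding less by (rule cond_prob_S_total_reward[symmetric]) (use assms in auto)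
  finally show ?thesis .
qed

lemma binom_mass_likelihood_ratio_mono:
  assumes "0 \<le> a" "a \<le> p" "p \<le> 1" "j \<le> m" "m \<le> G"
  shows "binom_mass G a m * binom_mass G p j \<le> binom_mass G p m * binom_mass G a j"
proof -
  obtain d e where m: "m = j + d" and G: "G = m + e"
    using assms(4,5) by (metis le_add_diff_inverse)
  define X where "X = real (G choose m) * real (G choose j) * (a * p) ^ j * ((1 - a) * (1 - p)) ^ e"
  have "0 \<le> X"
    using assms unfolding X_def by simp
  moreover have "a * (1 - p) \<le> p * (1 - a)"
    using assms by (simp add: algebra_simps)
  then have "(a * (1 - p)) ^ d \<le> (p * (1 - a)) ^ d"
    by (intro power_mono) (use assms in auto)
  ultimately have "X * (a * (1 - p)) ^ d \<le> X * (p * (1 - a)) ^ d"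
    by (rule mult_left_mono[rotated])
  moreover have "binom_mass G a m * binom_mass G p j = X * (a * (1 - p)) ^ d"
    and "binom_mass G p m * binom_mass G a j = X * (p * (1 - a)) ^ d"
    unfolding binom_mass_def X_def m G by (simp_all add: power_add power_mult_distrib mult_ac)
  ultimately show ?thesis
    by simp
qed

lemma cond_tail_mono:
  assumes "0 < a" "a \<le> p" "p < 1" "2 \<le> G"
  shows "cond_tail G k a \<le> cond_tail G k p"
proof -
  define low where "low q = (\<Sum>j\<in>{1..<G} \<inter> {..k}. binom_mass G q j)" for q
  have total: "tail_mass G 0 q = low q + tail_mass G k q" for q
  proof -
    have "tail_mass G 0 q = (\<Sum>j\<in>({1..<G} \<inter> {..k}) \<union> {Suc k..<G}. binom_mass G q j)"
      unfolding tail_mass_def by (rule sum.cong) auto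
    also have "\<dots> = low q + tail_mass G k q"
      unfolding low_def tail_mass_def by (rule sum.union_disjoint) auto
    finally show ?thesis .
  qed
  have "tail_mass G k a * low p = (\<Sum>m\<in>{Suc k..<G}. \<Sum>j\<in>{1..<G} \<inter> {..k}. binom_mass G a m * binom_mass G p j)"
    unfolding tail_mass_def low_def by (rule sum_product)
  also have "\<dots> \<le> (\<Sum>m\<in>{Suc k..<G}. \<Sum>j\<in>{1..<G} \<inter> {..k}. binom_mass G p m * binom_mass G a j)"
    by (intro sum_mono binom_mass_likelihood_ratio_mono) (use assms in auto)
  also have "\<dots> = tail_mass G k p * low a"
    unfolding tail_mass_def low_def by (rule sum_product[symmetric])
  finally have cross: "tail_mass G k a * low p \<le> tail_mass G k p * low a" .
  have "0 < tail_mass G 0 a" "0 < tail_mass G 0 p"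
    using assms by (auto intro: tail_mass_pos)
  then show ?thesis
    using cross unfolding cond_tail_def total by (simp add: divide_simps algebra_simps)
qed

lemma continuous_on_cond_tail:
  assumes "2 \<le> G" "0 < c" "d < 1"
  shows "continuous_on {c..d} (cond_tail G k)"
proof -
  have "tail_mass G 0 p \<noteq> 0" if "p \<in> {c..d}" for p
    using that assms tail_mass_pos[of p 0 G] by auto
  then show ?thesis
    unfolding cond_tail_def tail_mass_def binom_mass_def by (intro continuous_intros) auto
qed

lemma integral_ge_left_endpoint:
  fixes f g :: "real \<Rightarrow> real"
  assumes "a \<le> b" "continuous_on {a..b} g" "mono_on {a..b} g"
    and "\<And>x. x \<in> {a<..<b} \<Longrightarrow> f x = g x"
  shows "f integrable_on {a..b}" "(b - a) * g a \<le> integral {a..b} f"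
proof -
  have g: "(g has_integral integral {a..b} g) {a..b}"
    using integrable_continuous_interval[OF assms(2)] by (rule integrable_integral)
  have "(f has_integral integral {a..b} g) {a..b}"
    by (rule has_integral_spike_finite[OF _ _ g, of "{a, b}"]) (use assms(4) in auto)
  then show "f integrable_on {a..b}"
    by blast
  have f: "integral {a..b} f = integral {a..b} g"
    using \<open>(f has_integral integral {a..b} g) {a..b}\<close> by (rule integral_unique)
  have "(b - a) * g a = integral {a..b} (\<lambda>_. g a)"
    using assms(1) by simp
  also have "\<dots> \<le> integral {a..b} g"
    using assms(1) g by (intro integral_le) (auto intro: mono_onD[OF assms(3)])
  finally show "(b - a) * g a \<le> integral {a..b} f"
    unfolding f .
qed

lemma integral_ge_left_riemann_sum:
  fixes f :: "real \<Rightarrow> real" and g :: "nat \<Rightarrow> real \<Rightarrow> real" and N :: real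
  assumes "0 < N"
    and "\<And>u. u < n \<Longrightarrow> continuous_on {real u / N..real (Suc u) / N} (g u)"
    and "\<And>u. u < n \<Longrightarrow> mono_on {real u / N..real (Suc u) / N} (g u)"
    and "\<And>u x. u < n \<Longrightarrow> x \<in> {real u / N<..<real (Suc u) / N} \<Longrightarrow> f x = g u x"
  shows "f integrable_on {0..real n / N} \<and>
    (\<Sum>u<n. g u (real u / N)) / N \<le> integral {0..real n / N} f"
  using assms(2-4)
proof (induction n)
  case 0
  then show ?case
    using has_integral_refl(2)[of f 0] by (auto simp: integrable_on_def)
next
  case (Suc n)
  let ?a = "real n / N" and ?b = "real (Suc n) / N"
  have IH: "f integrable_on {0..?a}" "(\<Sum>u<n. g u (real u / N)) / N \<le> integral {0..?a} f"
    using Suc by auto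
  have ab: "0 \<le> ?a" "?a \<le> ?b"
    using assms(1) by (auto intro: divide_right_mono)
  have "continuous_on {?a..?b} (g n)" "mono_on {?a..?b} (g n)"
    and "\<And>x. x \<in> {?a<..<?b} \<Longrightarrow> f x = g n x"
    using Suc.prems by auto
  note cell = integral_ge_left_endpoint[OF ab(2) this]
  have "f integrable_on {0..?b}"
    using Henstock_Kurzweil_Integration.integrable_combine[OF ab IH(1) cell(1)] .
  moreover have "integral {0..?a} f + integral {?a..?b} f = integral {0..?b} f"
    using Henstock_Kurzweil_Integration.integral_combine[OF ab] calculation .
  moreover have "?b - ?a = 1 / N"
    by (simp add: diff_divide_distrib[symmetric])
  ultimately show ?case
    using IH(2) cell(2) by (simp add: add_divide_distrib)
qed

lemma cond_prob_S_adv_hat_less_on_cell: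
  assumes "2 \<le> G" "0 < M" "0 < x" "x < 1" "real u < x * real (G * M)" "x * real (G * M) < real u + 1"
  shows "cond_prob_S G x {r. adv_hat G r i < adv x r i} = cond_tail G (u div M) x"
proof (rule cond_prob_S_adv_hat_less)
  define k where "k = u div M"
  have "k * M \<le> u" "Suc u \<le> k * M + M"
    unfolding k_def using div_mult_mod_eq[of u M] mod_less_divisor[OF assms(2), of u] by linarith+
  then have "real (k * M) \<le> real u" "real (Suc u) \<le> real (k * M + M)"
    by (simp_all only: of_nat_le_iff)
  then have "real M * real k \<le> real u" "real u + 1 \<le> real M * (real k + 1)"
    by (simp_all add: algebra_simps)
  moreover have "real u < real M * (x * G)" "real M * (x * G) < real u + 1"
    using assms(5,6) by (simp_all add: mult_ac)
  ultimately have "real M * real k < real M * (x * G)" "real M * (x * G) < real M * (real k + 1)"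
    by linarith+
  then show "real (u div M) \<le> x * G" "x * G < real (u div M) + 1"
    using assms(2) by (simp_all add: mult_less_cancel_left_pos k_def)
qed (use assms in auto)

lemma avg_adv_hat_less_ge_left_sum:
  fixes G M n :: nat
  assumes "2 \<le> G" "0 < M" "0 < n" "2 * n \<le> G * M"
  shows "(\<Sum>u<n. if u < M then 1 else cond_tail G (u div M) (real u / real (G * M))) / n \<le>
    avg_over 0 (real n / real (G * M)) (\<lambda>p. cond_prob_S G p {r. adv_hat G r i < adv p r i})"
proof -
  let ?N = "real (G * M)" and ?f = "\<lambda>p. cond_prob_S G p {r. adv_hat G r i < adv p r i}"
  define g where "g u x = (if u < M then 1 else cond_tail G (u div M) x)" for u x
  have N: "0 < ?N"
    using assms by simp
  have cell_le_1: "real (Suc u) / ?N < 1" if "u < n" for u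
  proof -
    have "Suc u < G * M"
      using that assms(4) by linarith
    then have "real (Suc u) < ?N"
      by (simp only: of_nat_less_iff)
    then show ?thesis
      using N by simp
  qed
  have f_eq: "?f x = g u x" if u: "u < n" and x: "x \<in> {real u / ?N<..<real (Suc u) / ?N}" for u x
  proof -
    have "0 \<le> real u / ?N" "real u / ?N < x" "x < real (Suc u) / ?N"
      using x by auto
    then have "0 < x" "x < 1"
      using cell_le_1[OF u] by linarith+
    moreover have "real u < x * ?N" "x * ?N < real u + 1"
      using x N by (auto simp: field_simps)
    ultimately show ?thesis
      using assms(1,2) cond_prob_S_adv_hat_less_on_cell cond_tail_0 by (simp add: g_def)
  qed
  have g_cell: "continuous_on {real u / ?N..real (Suc u) / ?N} (g u) \<and>
      mono_on {real u / ?N..real (Suc u) / ?N} (g u)" if "u < n" for u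
  proof (cases "u < M")
    case True
    then show ?thesis
      by (auto simp: g_def intro: mono_onI)
  next
    case False
    then have "0 < real u / ?N"
      using assms(2) N by simp
    then show ?thesis
      using False assms(1) cell_le_1[OF that]
      by (auto simp: g_def intro!: continuous_on_cond_tail mono_onI cond_tail_mono)
  qed
  have "(\<Sum>u<n. g u (real u / ?N)) / ?N \<le> integral {0..real n / ?N} ?f"
    using integral_ge_left_riemann_sum[OF N, of n g ?f] g_cell f_eq by blast
  then have "(\<Sum>u<n. g u (real u / ?N)) / n \<le> avg_over 0 (real n / ?N) ?f"
    using assms(3) N by (simp add: avg_over_def field_simps)
  then show ?thesis
    unfolding g_def .
qed

definition tail_count :: "nat \<Rightarrow> nat \<Rightarrow> nat \<Rightarrow> nat \<Rightarrow> nat" where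
  "tail_count G N k u = (\<Sum>j\<in>{Suc k..<G}. (G choose j) * u ^ j * (N - u) ^ (G - j))"

lemma tail_mass_of_nat:
  assumes "0 < N" "u \<le> N"
  shows "tail_mass G k (real u / real N) = real (tail_count G N k u) / real N ^ G"
proof -
  have "binom_mass G (real u / real N) j = real ((G choose j) * u ^ j * (N - u) ^ (G - j)) / real N ^ G"
    if "j \<le> G" for j
  proof -
    have "1 - real u / real N = real (N - u) / real N"
      using assms by (simp add: of_nat_diff field_simps)
    moreover have "real N ^ G = real N ^ j * real N ^ (G - j)"
      using that by (simp flip: power_add)
    ultimately show ?thesis
      unfolding binom_mass_def using assms by (simp add: power_divide)
  qed
  then show ?thesis
    unfolding tail_mass_def tail_count_def of_nat_sum sum_divide_distrib by (intro sum.cong) auto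
qed

lemma cond_tail_of_nat:
  assumes "0 < N" "u \<le> N"
  shows "cond_tail G k (real u / real N) = real (tail_count G N k u) / real (tail_count G N 0 u)"
  using assms by (simp add: cond_tail_def tail_mass_of_nat)

text \<open>Left Riemann sum of \<open>avg_adv_hat_less_ge_left_sum\<close>, scaled by \<open>D\<close> and rounded down
  cell by cell.\<close>
definition left_sum_floor :: "nat \<Rightarrow> nat \<Rightarrow> nat \<Rightarrow> nat \<Rightarrow> nat" where
  "left_sum_floor G M D n = (\<Sum>u<n. if u < M then D
     else D * tail_count G (G * M) (u div M) u div tail_count G (G * M) 0 u)"

lemma left_sum_floor_le:
  assumes "0 < D" "0 < G * M" "n \<le> G * M"
  shows "real (left_sum_floor G M D n) / D \<le>
    (\<Sum>u<n. if u < M then 1 else cond_tail G (u div M) (real u / real (G * M)))"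
  unfolding left_sum_floor_def of_nat_sum sum_divide_distrib
proof (rule sum_mono)
  fix u
  assume "u \<in> {..<n}"
  then have u: "u \<le> G * M"
    using assms(3) by simp
  let ?a = "tail_count G (G * M) (u div M) u" and ?b = "tail_count G (G * M) 0 u"
  have "real (D * ?a div ?b) / D \<le> real (D * ?a) / real ?b / D"
    using assms(1) by (intro divide_right_mono of_nat_div_le_of_nat) simp
  also have "\<dots> = cond_tail G (u div M) (real u / real (G * M))"
    using assms(1,2) u by (subst cond_tail_of_nat) auto
  finally show "real (if u < M then D else D * ?a div ?b) / D \<le>
      (if u < M then 1 else cond_tail G (u div M) (real u / real (G * M)))"
    using assms(1) by simp
qed

lemma avg_adv_hat_less_gt_of_left_sum_floor:
  fixes G M n D :: nat
  assumes "2 \<le> G" "0 < M" "0 < n" "2 * n \<le> G * M" "0 < D" "T = real n / real (G * M)"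
    and "c * real (D * n) < real (left_sum_floor G M D n)"
  shows "c < avg_over 0 T (\<lambda>p. cond_prob_S G p {r. adv_hat G r i < adv p r i})"
proof -
  have "c < real (left_sum_floor G M D n) / D / n"
    using assms(3,5,7) by (simp add: field_simps)
  also have "\<dots> \<le> (\<Sum>u<n. if u < M then 1 else cond_tail G (u div M) (real u / real (G * M))) / n"
    using assms by (intro divide_right_mono left_sum_floor_le) auto
  also have "\<dots> \<le> avg_over 0 T (\<lambda>p. cond_prob_S G p {r. adv_hat G r i < adv p r i})"
    unfolding assms(6) using assms(1-4) by (rule avg_adv_hat_less_ge_left_sum)
  finally show ?thesis .
qed

text \<open>The form used for evaluation: for small \<open>k\<close> it has far fewer terms than the defining sum.\<close>
lemma tail_count_eq_diff:
  assumes "u \<le> N" "k < G"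
  shows "tail_count G N k u = N ^ G - u ^ G - (\<Sum>j\<le>k. (G choose j) * u ^ j * (N - u) ^ (G - j))"
proof -
  let ?t = "\<lambda>j. (G choose j) * u ^ j * (N - u) ^ (G - j)"
  have "{..G} = insert G ({..k} \<union> {Suc k..<G})"
    using assms(2) by auto
  then have "(\<Sum>j\<le>G. ?t j) = ?t G + (\<Sum>j\<in>{..k} \<union> {Suc k..<G}. ?t j)"
    using assms(2) by simp
  also have "\<dots> = u ^ G + ((\<Sum>j\<le>k. ?t j) + tail_count G N k u)"
    unfolding tail_count_def by (subst sum.union_disjoint) auto
  finally have "(\<Sum>j\<le>G. ?t j) = u ^ G + ((\<Sum>j\<le>k. ?t j) + tail_count G N k u)" .
  moreover have "(\<Sum>j\<le>G. ?t j) = N ^ G"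
    using binomial_ring[of u "N - u" G] assms(1) by (simp add: mult_ac)
  ultimately show ?thesis
    by simp
qed

lemma sum_lessThan_numeral:
  "(\<Sum>u<numeral k. f u) = (\<Sum>u<pred_numeral k. f u) + (f (pred_numeral k) :: 'a :: comm_monoid_add)"
  by (simp add: numeral_eq_Suc)

lemma sum_atMost_numeral:
  "(\<Sum>u\<le>numeral k. f u) = (\<Sum>u\<le>pred_numeral k. f u) + (f (numeral k) :: 'a :: comm_monoid_add)"
  by (simp add: numeral_eq_Suc)

lemmas left_sum_floor_eval = left_sum_floor_def tail_count_eq_diff
  sum_lessThan_numeral sum_atMost_numeral binomial_fact' fact_numeral

lemma avg_adv_hat_less_half:
  assumes "2 \<le> G" "G \<le> 8"
  shows "0.63 < avg_over 0 (1/2) (\<lambda>p. cond_prob_S G p {r. adv_hat G r i < adv p r i})"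
proof (rule avg_adv_hat_less_gt_of_left_sum_floor[where M = 10 and n = "5 * G" and D = 1000000])
  have "G \<in> {2, 3, 4, 5, 6, 7, 8}"
    using assms by auto
  then show "0.63 * real (1000000 * (5 * G)) < real (left_sum_floor G 10 1000000 (5 * G))"
    by (auto simp: left_sum_floor_eval)
qed (use assms in auto)

lemma avg_adv_hat_less_quarter:
  assumes "2 \<le> G" "G \<le> 8"
  shows "0.78 < avg_over 0 (1/4) (\<lambda>p. cond_prob_S G p {r. adv_hat G r i < adv p r i})"
proof (rule avg_adv_hat_less_gt_of_left_sum_floor[where M = 68 and n = "17 * G" and D = 1000000])
  have "G \<in> {2, 3, 4, 5, 6, 7, 8}"
    using assms by auto
  then show "0.78 * real (1000000 * (17 * G)) < real (left_sum_floor G 68 1000000 (17 * G))"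
    by (auto simp: left_sum_floor_eval)
qed (use assms in auto)

lemma avg_adv_hat_less_eq_1:
  assumes "2 \<le> G" "0 < T" "T * G \<le> 1"
  shows "avg_over 0 T (\<lambda>p. cond_prob_S G p {r. adv_hat G r i < adv p r i}) = 1"
proof -
  have "integral {0..T} (\<lambda>p. cond_prob_S G p {r. adv_hat G r i < adv p r i}) = integral {0..T} (\<lambda>_. 1)"
  proof (rule integral_spike[of "{0, T}"])
    fix x
    assume "x \<in> {0..T} - {0, T}"
    then have x: "0 < x" "x < T"
      by auto
    then have "x * G < T * G"
      using assms(1) by (intro mult_strict_right_mono) auto
    then have xG: "x * G < 1"
      using assms(3) by linarith
    moreover have "x \<le> x * G"
      using assms(1) x by simp
    ultimately have "x < 1"
      by linarith
    then show "1 = cond_prob_S G x {r. adv_hat G r i < adv x r i}"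
      using x xG assms(1) cond_prob_S_adv_hat_less[of x G 0] cond_tail_0 by simp
  qed auto
  then show ?thesis
    using assms(2) by (simp add: avg_over_def)
qed

lemma integral_reflect_shift_real:
  fixes f :: "real \<Rightarrow> 'a::euclidean_space"
  shows "integral {a..b} (\<lambda>x. f (c - x)) = integral {c - b..c - a} f"
proof -
  have "integral {a..b} (\<lambda>x. f (c - x)) = integral {a - c..b - c} (\<lambda>y. f (- y))"
    using integral_shift_real_ivl[of "a - c" "- c" "b - c" "\<lambda>y. f (- y)"] by simp
  also have "\<dots> = integral {c - b..c - a} f"
    using Henstock_Kurzweil_Integration.integral_reflect_real[of "c - a" "c - b" f] by simp
  finally show ?thesis .
qed

lemma avg_adv_hat_greater_reflect:
  assumes "0 < G" "0 < T" "T \<le> 1"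
  shows "avg_over (1 - T) 1 (\<lambda>p. cond_prob_S G p {r. adv_hat G r i > adv p r i}) =
    avg_over 0 T (\<lambda>p. cond_prob_S G p {r. adv_hat G r i < adv p r i})"
proof -
  let ?f = "\<lambda>p. cond_prob_S G p {r. adv_hat G r i < adv p r i}"
  have "integral {1 - T..1} (\<lambda>p. cond_prob_S G p {r. adv_hat G r i > adv p r i}) =
      integral {1 - T..1} (\<lambda>x. ?f (1 - x))"
    by (rule integral_spike[of "{0, 1}"]) (use assms cond_prob_S_adv_hat_greater_reflect in auto)
  also have "\<dots> = integral {0..T} ?f"
    using integral_reflect_shift_real[of "1 - T" 1 ?f 1] by simp
  finally show ?thesis
    by (simp add: avg_over_def)
qed

theorem corollary1:
  fixes G i :: nat
  assumes "2 \<le> G" and "G \<le> 8" and "i < G"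
  shows "(avg_over 0 (1/2) (\<lambda>p. cond_prob_S G p {r. adv_hat G r i < adv p r i}) > 0.63) \<and>
    (avg_over (1/2) 1 (\<lambda>p. cond_prob_S G p {r. adv_hat G r i > adv p r i}) > 0.63) \<and>
    (avg_over 0 (1/4) (\<lambda>p. cond_prob_S G p {r. adv_hat G r i < adv p r i}) > 0.78) \<and>
    (avg_over (3/4) 1 (\<lambda>p. cond_prob_S G p {r. adv_hat G r i > adv p r i}) > 0.78) \<and>
    (avg_over 0 (1/8) (\<lambda>p. cond_prob_S G p {r. adv_hat G r i < adv p r i}) = 1) \<and>
    (avg_over (7/8) 1 (\<lambda>p. cond_prob_S G p {r. adv_hat G r i > adv p r i}) = 1)"
proof -
  have reflect: "avg_over (1 - T) 1 (\<lambda>p. cond_prob_S G p {r. adv_hat G r i > adv p r i}) =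
      avg_over 0 T (\<lambda>p. cond_prob_S G p {r. adv_hat G r i < adv p r i})" if "0 < T" "T \<le> 1" for T
    using assms(1) that by (intro avg_adv_hat_greater_reflect) auto
  have "0.63 < avg_over 0 (1/2) (\<lambda>p. cond_prob_S G p {r. adv_hat G r i < adv p r i})"
    using assms(1,2) by (rule avg_adv_hat_less_half)
  moreover have "0.78 < avg_over 0 (1/4) (\<lambda>p. cond_prob_S G p {r. adv_hat G r i < adv p r i})"
    using assms(1,2) by (rule avg_adv_hat_less_quarter)
  moreover have "avg_over 0 (1/8) (\<lambda>p. cond_prob_S G p {r. adv_hat G r i < adv p r i}) = 1"
    using assms(1,2) by (intro avg_adv_hat_less_eq_1) auto
  ultimately show ?thesis
    using reflect[of "1/2"] reflect[of "1/4"] reflect[of "1/8"] by simp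
qed

end
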